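(* Let $m$ be a positive integer written in binary as $m=\sum_{j=1}^{s}2^{m_j}$ with natural numbers $m_1>m_2>\dots>m_s\ge0$. Then $s_k(m)=0$ for all natural numbers $k\ne m_1,\,m_1-1$.
   Context: For a natural number $m>0$ and $k\in\{0,1,2,\dots\}$, let $S_k(m)$ be the set of all finite sequences $((m_1,l_1),(m_2,l_2),\dots,(m_t,l_t))$ with $t\ge1$ of pairs of natural numbers such that $k=m_1>m_2>\dots>m_t\ge0$, $m_j\ge l_j\ge0$ for $j=1,\dots,t$, and $m=\sum_{j=1}^{t}\sum_{p=0}^{l_j}2^{m_j-p}$. Let $s_k(m)=|S_k(m)|$. (In the claim, the $m_j$ denote the binary digits positions of $m$, independent of the notation inside the definition of $S_k(m)$.) *)

theory Defs
  imports Main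
begin

definition S :: "nat \<Rightarrow> nat \<Rightarrow> (nat \<times> nat) list set" where
  "S k m = {xs. xs \<noteq> [] \<and> fst (hd xs) = k
      \<and> sorted_wrt (\<lambda>a b. fst a > fst b) xs
      \<and> (\<forall>(mj, lj) \<in> set xs. lj \<le> mj)
      \<and> m = (\<Sum>(mj, lj) \<leftarrow> xs. \<Sum>p = 0..lj. 2 ^ (mj - p))}"

definition s :: "nat \<Rightarrow> nat \<Rightarrow> nat" where
  "s k m = card (S k m)"

end

theory Submission
  imports Defs
begin

text \<open>The leading block of a sequence in \<open>S k m\<close> alone is at least \<open>2^k\<close>, and each
  block \<open>2^mj + \<dots> + 2^(mj - lj)\<close> falls short of \<open>2^(mj+1)\<close>, so with strictly decreasing
  leading exponents the whole sum is below \<open>2^(k+2)\<close>. The binary expansion places \<open>m\<close> in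
  \<open>[2^m\<^sub>1, 2^(m\<^sub>1+1))\<close>, and the two windows overlap only if \<open>m\<^sub>1 \<in> {k, k+1}\<close>.\<close>

lemma sum_list_power2_less:
  assumes "sorted_wrt (>) ms" and "\<forall>j\<in>set ms. j < n"
  shows "(\<Sum>j \<leftarrow> ms. 2 ^ j) < (2::nat) ^ n"
  using assms
proof (induction ms arbitrary: n)
  case Nil
  then show ?case by simp
next
  case (Cons x xs)
  have "(\<Sum>j \<leftarrow> xs. 2 ^ j) < (2::nat) ^ x"
    using Cons by auto
  moreover have "(2::nat) ^ Suc x \<le> 2 ^ n"
    using Cons.prems by (intro power_increasing) auto
  ultimately show ?case by simp
qed

lemma binary_expansion_bounds:
  assumes "sorted_wrt (>) (h # rest)"
  shows "(2::nat) ^ h \<le> (\<Sum>j \<leftarrow> h # rest. 2 ^ j)" and "(\<Sum>j \<leftarrow> h # rest. 2 ^ j) < (2::nat) ^ Suc h"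
  using sum_list_power2_less[of rest h] assms by auto

lemma power2_block_sum_plus_last:
  assumes "l \<le> mj"
  shows "(\<Sum>p = 0..l. (2::nat) ^ (mj - p)) + 2 ^ (mj - l) = 2 ^ Suc mj"
  using assms
proof (induction l)
  case 0
  then show ?case by simp
next
  case (Suc l)
  have "mj - l = Suc (mj - Suc l)"
    using Suc.prems by simp
  then have "(\<Sum>p = 0..Suc l. (2::nat) ^ (mj - p)) + 2 ^ (mj - Suc l)
      = (\<Sum>p = 0..l. 2 ^ (mj - p)) + 2 ^ (mj - l)"
    by simp
  also have "\<dots> = 2 ^ Suc mj"
    using Suc by simp
  finally show ?case .
qed

lemma power2_block_sum_less:
  assumes "l \<le> mj"
  shows "(\<Sum>p = 0..l. (2::nat) ^ (mj - p)) < 2 ^ Suc mj"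
  using power2_block_sum_plus_last[OF assms] by (metis less_add_same_cancel1 zero_less_power zero_less_numeral)

lemma power2_block_sum_ge: "(2::nat) ^ mj \<le> (\<Sum>p = 0..l. 2 ^ (mj - p))"
  using member_le_sum[of 0 "{0..l}" "\<lambda>p. (2::nat) ^ (mj - p)"] by simp

lemma block_list_sum_less:
  assumes "sorted_wrt (\<lambda>a b. fst a > fst b) xs" and "\<forall>(mj, lj) \<in> set xs. lj \<le> mj"
    and "\<forall>a\<in>set xs. fst a < n"
  shows "(\<Sum>(mj, lj) \<leftarrow> xs. \<Sum>p = 0..lj. (2::nat) ^ (mj - p)) < 2 ^ Suc n"
  using assms
proof (induction xs arbitrary: n)
  case Nil
  then show ?case by simp
next
  case (Cons x xs)
  obtain a b where x: "x = (a, b)"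
    by fastforce
  have "(\<Sum>(mj, lj) \<leftarrow> xs. \<Sum>p = 0..lj. (2::nat) ^ (mj - p)) < 2 ^ Suc a"
    using Cons x by auto
  moreover have "(\<Sum>p = 0..b. (2::nat) ^ (a - p)) < 2 ^ Suc a"
    using Cons.prems x by (intro power2_block_sum_less) auto
  moreover have "(2::nat) ^ Suc (Suc a) \<le> 2 ^ Suc n"
    using Cons.prems x by (intro power_increasing) auto
  ultimately show ?case
    using x by simp
qed

lemma S_bounds:
  assumes "xs \<in> S k m"
  shows "2 ^ k \<le> m" and "m < 2 ^ Suc (Suc k)"
proof -
  obtain l ys where xs: "xs = (k, l) # ys"
    using assms unfolding S_def by (cases xs) auto
  have ys: "sorted_wrt (\<lambda>a b. fst a > fst b) ys" "\<forall>(mj, lj) \<in> set ys. lj \<le> mj"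
      "\<forall>a\<in>set ys. fst a < k" and "l \<le> k"
    using assms xs unfolding S_def by auto
  have m: "m = (\<Sum>p = 0..l. 2 ^ (k - p)) + (\<Sum>(mj, lj) \<leftarrow> ys. \<Sum>p = 0..lj. 2 ^ (mj - p))"
    using assms xs unfolding S_def by auto
  show "2 ^ k \<le> m"
    using m power2_block_sum_ge[of k l] by simp
  show "m < 2 ^ Suc (Suc k)"
    using m power2_block_sum_less[OF \<open>l \<le> k\<close>] block_list_sum_less[OF ys] by simp
qed

theorem lemma4p4:
  fixes m k :: nat and ms :: "nat list"
  assumes "m > 0"
    and "ms \<noteq> []"
    and "sorted_wrt (>) ms"
    and "m = (\<Sum>j \<leftarrow> ms. 2 ^ j)"
    and "k \<noteq> hd ms"
    and "k \<noteq> hd ms - 1"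
  shows "s k m = 0"
proof -
  obtain h rest where ms: "ms = h # rest"
    using assms(2) by (cases ms) auto
  have "S k m = {}"
  proof (rule equals0I)
    fix xs
    assume "xs \<in> S k m"
    then have "2 ^ k \<le> m" and "m < 2 ^ Suc (Suc k)"
      by (rule S_bounds)+
    moreover have "2 ^ h \<le> m" and "m < 2 ^ Suc h"
      using binary_expansion_bounds assms(3,4) ms by auto
    ultimately have "(2::nat) ^ k < 2 ^ Suc h" and "(2::nat) ^ h < 2 ^ Suc (Suc k)"
      by linarith+
    then have "k < Suc h" and "h < Suc (Suc k)"
      using power_less_imp_less_exp[of "2::nat"] by (metis Suc_1 lessI)+
    then show False
      using assms(5,6) ms by auto
  qed
  then show ?thesis
    unfolding s_def by simp
qed

end
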